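(* Consider a discrete-time random walk $(X_n)_{n\ge0}$ on $\mathbb{Z}$ with $X_0=0$ almost surely and i.i.d. increments, $\mathbb{P}(X_{n+1}-X_n=i)=p_i$, where there is a fixed positive integer $l$ with $p_i=0$ for $|i|>l$. Suppose the walk has positive bias, $\sum_{i=-l}^{l}ip_i>0$. Let $\gamma\in(0,1)$ be a solution of $$f(\gamma):=\sum_{i=1}^{l}\Big(\sum_{j=1}^{i}\gamma^j\Big)p_i-\sum_{i=1}^{l}\Big(\sum_{j=1}^{i}\gamma^{-j}\Big)p_{-i}=0$$ (such a solution exists). Then for every integer $\xi>0$, $$\mathbb{P}(\exists n\ \text{s.t.}\ X_n\le-\xi)\le\frac{1}{\gamma^{-\xi-1}-\gamma^{-1}+1}.$$ *)

theory Defs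
  imports "HOL-Probability.Probability"
begin

definition rw_f :: "nat \<Rightarrow> (int \<Rightarrow> real) \<Rightarrow> real \<Rightarrow> real" where
  "rw_f l p g =
     (\<Sum>i=1..l. (\<Sum>j=1..i. g ^ j) * p (int i))
   - (\<Sum>i=1..l. (\<Sum>j=1..i. inverse g ^ j) * p (- int i))"

end

theory Submission
  imports Defs
begin

text \<open>
  The potential \<psi> = walk_potential \<gamma>, i.e. \<psi>(y) = \<gamma>^(y+1) for y \<ge> 0 and
  \<psi>(y) = \<gamma>^y - 1 + \<gamma> for y < 0, is superharmonic for the walk precisely because
  f(\<gamma>) = 0: its expected one-step increment at x is at most \<gamma>^x (\<gamma> - 1) f(\<gamma>).
  It is positive, equals \<gamma> at 0 and is at least \<gamma>^(-\<xi>) - 1 + \<gamma> on the half-line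
  y \<le> -\<xi>, so optional stopping bounds the probability of reaching -\<xi> within N steps by
  \<gamma> / (\<gamma>^(-\<xi>) - 1 + \<gamma>), which is the claimed bound; let N tend to infinity.
  Up to a fixed horizon the walk only takes finitely many step sequences, so optional stopping
  reduces to an induction on N over sums indexed by these sequences.
\<close>

definition walk_potential :: "real \<Rightarrow> int \<Rightarrow> real" where
  "walk_potential g y = max (g powi (y + 1)) (g powi y - (1 - g))"

lemma walk_potential_pos: "0 < g \<Longrightarrow> 0 < walk_potential g y"
  by (simp add: walk_potential_def less_max_iff_disj)

lemma walk_potential_0 [simp]: "walk_potential g 0 = g"
  by (simp add: walk_potential_def)

lemma walk_potential_lower_bound:
  assumes "0 < g" "g < 1" "y \<le> z"
  shows "g powi z - (1 - g) \<le> walk_potential g y"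
  using power_int_decreasing[of y z g] assms by (simp add: walk_potential_def le_max_iff_disj)

lemma max_diff_le_max_diff:
  fixes a b a' b' :: real
  shows "max a' b' - max a b \<le> max (a' - a) (b' - b)"
  by (auto simp: max_def)

lemma walk_potential_increment:
  assumes "0 < g" "g < 1"
  shows "walk_potential g (x + i) - walk_potential g x
           \<le> g powi x * (if 0 < i then g else 1) * (g powi i - 1)"
proof -
  define a b where "a = g powi x" and "b = g powi i"
  have "walk_potential g (x + i) = max (a * b * g) (a * b - (1 - g))"
    "walk_potential g x = max (a * g) (a - (1 - g))"
    using assms by (simp_all add: walk_potential_def a_def b_def power_int_add)
  then have "walk_potential g (x + i) - walk_potential g x
          \<le> max (a * g * (b - 1)) (a * (b - 1))"
    using max_diff_le_max_diff[of "a * b * g" "a * b - (1 - g)" "a * g" "a - (1 - g)"]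
    by (simp add: algebra_simps)
  also have "\<dots> = a * (if 0 < i then g else 1) * (b - 1)"
  proof (cases "0 < i")
    case True
    then have "b < 1" using power_int_strict_decreasing[of 0 i g] assms by (simp add: b_def)
    then have "0 \<le> a * (1 - g) * (1 - b)" using assms by (simp add: a_def)
    then show ?thesis using True by (simp add: max_def algebra_simps)
  next
    case False
    then have "1 \<le> b" using power_int_decreasing[of i 0 g] assms by (simp add: b_def)
    then have "0 \<le> a * (1 - g) * (b - 1)" using assms by (simp add: a_def)
    then show ?thesis using False by (simp add: max_def algebra_simps)
  qed
  finally show ?thesis by (simp add: a_def b_def)
qed

lemma sum_atLeastAtMost_int_symmetric:
  "(\<Sum>i = - int l..int l. f i) = f 0 + (\<Sum>i = 1..l. f (int i)) + (\<Sum>i = 1..l. f (- int i))"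
proof (induction l)
  case (Suc l)
  have "{- int (Suc l)..int (Suc l)} = insert (- int (Suc l)) (insert (int (Suc l)) {- int l..int l})"
    by auto
  then show ?case using Suc by (simp add: ac_simps)
qed simp

lemma rw_f_eq_sum:
  assumes "0 < g"
  shows "(g - 1) * rw_f l p g
           = (\<Sum>i = - int l..int l. p i * (if 0 < i then g else 1) * (g powi i - 1))"
proof -
  have up: "(g - 1) * (\<Sum>j = 1..i. g ^ j) = g * (g powi int i - 1)" if "1 \<le> i" for i
    using sum_gp_multiplied[OF that, of g] by (simp add: algebra_simps)
  have down: "(g - 1) * (\<Sum>j = 1..i. inverse g ^ j) = 1 - g powi (- int i)" if "1 \<le> i" for i
  proof -
    have "(g - 1) * (\<Sum>j = 1..i. inverse g ^ j) = g * ((1 - inverse g) * (\<Sum>j = 1..i. inverse g ^ j))"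
      using assms by (simp add: field_simps)
    also have "\<dots> = 1 - g powi (- int i)"
      using sum_gp_multiplied[OF that, of "inverse g"] assms
      by (simp add: field_simps power_int_minus)
    finally show ?thesis .
  qed
  have "(g - 1) * rw_f l p g
          = (\<Sum>i = 1..l. p (int i) * ((g - 1) * (\<Sum>j = 1..i. g ^ j)))
            - (\<Sum>i = 1..l. p (- int i) * ((g - 1) * (\<Sum>j = 1..i. inverse g ^ j)))"
    by (simp add: rw_f_def right_diff_distrib sum_distrib_left mult_ac)
  also have "\<dots> = (\<Sum>i = 1..l. p (int i) * (g * (g powi int i - 1)))
                    - (\<Sum>i = 1..l. p (- int i) * (1 - g powi (- int i)))"
    by (intro arg_cong2[where f = "(-)"] sum.cong) (use up down in auto)
  finally show ?thesis
    by (simp add: sum_atLeastAtMost_int_symmetric sum_subtractf right_diff_distrib mult_ac)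
qed

lemma walk_potential_superharmonic:
  assumes g: "0 < g" "g < 1" "rw_f l p g = 0"
    and p: "\<And>i. 0 \<le> p i" "(\<Sum>i = - int l..int l. p i) = 1"
  shows "(\<Sum>i = - int l..int l. p i * walk_potential g (x + i)) \<le> walk_potential g x"
proof -
  have "(\<Sum>i = - int l..int l. p i * walk_potential g (x + i)) - walk_potential g x
          = (\<Sum>i = - int l..int l. p i * (walk_potential g (x + i) - walk_potential g x))"
    using p(2) by (simp add: right_diff_distrib sum_subtractf flip: sum_distrib_right)
  also have "\<dots> \<le> (\<Sum>i = - int l..int l. p i * (g powi x * (if 0 < i then g else 1) * (g powi i - 1)))"
    by (intro sum_mono mult_left_mono walk_potential_increment g p)
  also have "\<dots> = g powi x * ((g - 1) * rw_f l p g)"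
    by (simp add: rw_f_eq_sum g(1) sum_distrib_left mult_ac)
  finally show ?thesis using g(3) by simp
qed

definition hits :: "int set \<Rightarrow> int \<Rightarrow> int list \<Rightarrow> bool" where
  "hits T x s \<longleftrightarrow> (\<exists>n \<le> length s. x + sum_list (take n s) \<in> T)"

definition hit_prob :: "(int \<Rightarrow> real) \<Rightarrow> int set \<Rightarrow> int set \<Rightarrow> nat \<Rightarrow> int \<Rightarrow> real" where
  "hit_prob p R T N x =
     (\<Sum>s \<in> {s. set s \<subseteq> R \<and> length s = N}. if hits T x s then prod_list (map p s) else 0)"

lemma hits_Nil [simp]: "hits T x [] \<longleftrightarrow> x \<in> T"
  by (simp add: hits_def)

lemma hits_Cons [simp]: "hits T x (i # s) \<longleftrightarrow> x \<in> T \<or> hits T (x + i) s"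
proof
  assume "hits T x (i # s)"
  then obtain n where "n \<le> Suc (length s)" "x + sum_list (take n (i # s)) \<in> T"
    by (auto simp: hits_def)
  then show "x \<in> T \<or> hits T (x + i) s"
    by (cases n) (auto simp: hits_def add.assoc)
next
  assume "x \<in> T \<or> hits T (x + i) s"
  then show "hits T x (i # s)"
  proof
    assume "hits T (x + i) s"
    then obtain n where "n \<le> length s" "x + i + sum_list (take n s) \<in> T"
      by (auto simp: hits_def)
    then show ?thesis
      by (auto simp: hits_def add.assoc intro!: exI[of _ "Suc n"])
  qed (auto simp: hits_def intro: exI[of _ 0])
qed

lemma lists_length_0_eq: "{s. set s \<subseteq> R \<and> length s = 0} = {[]}"
  by auto

lemma sum_lists_length_Suc:
  assumes "finite R"
  shows "(\<Sum>s \<in> {s. set s \<subseteq> R \<and> length s = Suc N}. F s)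
           = (\<Sum>i\<in>R. \<Sum>s \<in> {s. set s \<subseteq> R \<and> length s = N}. F (i # s))"
proof -
  have "(\<Sum>s \<in> {s. set s \<subseteq> R \<and> length s = Suc N}. F s)
          = (\<Sum>(s, i) \<in> {s. set s \<subseteq> R \<and> length s = N} \<times> R. F (i # s))"
    unfolding lists_length_Suc_eq by (subst sum.reindex) (auto simp: inj_on_def case_prod_beta)
  also have "\<dots> = (\<Sum>s \<in> {s. set s \<subseteq> R \<and> length s = N}. \<Sum>i\<in>R. F (i # s))"
    by (simp add: sum.cartesian_product)
  also have "\<dots> = (\<Sum>i\<in>R. \<Sum>s \<in> {s. set s \<subseteq> R \<and> length s = N}. F (i # s))"
    by (rule sum.swap)
  finally show ?thesis .
qed

lemma sum_prod_list_lists_length: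
  fixes p :: "'a \<Rightarrow> 'b::comm_semiring_1"
  assumes "finite R" "sum p R = 1"
  shows "(\<Sum>s \<in> {s. set s \<subseteq> R \<and> length s = N}. prod_list (map p s)) = 1"
proof (induction N)
  case (Suc N)
  then show ?case
    by (simp add: sum_lists_length_Suc assms mult.commute[of "p _"] flip: sum_distrib_right)
qed (unfold lists_length_0_eq, simp)

lemma hit_prob_0: "hit_prob p R T 0 x = (if x \<in> T then 1 else 0)"
  unfolding hit_prob_def lists_length_0_eq by simp

lemma hit_prob_Suc:
  assumes "finite R" "sum p R = 1"
  shows "hit_prob p R T (Suc N) x = (if x \<in> T then 1 else \<Sum>i\<in>R. p i * hit_prob p R T N (x + i))"
  using sum_prod_list_lists_length[OF assms, of "Suc N"]
  by (simp add: hit_prob_def sum_lists_length_Suc assms sum_distrib_left if_distrib cong: if_cong)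

lemma hit_prob_le_superharmonic:
  fixes h :: "int \<Rightarrow> real"
  assumes R: "finite R" "sum p R = 1" "\<And>i. i \<in> R \<Longrightarrow> 0 \<le> p i"
    and h_nonneg: "\<And>y. 0 \<le> h y"
    and h_super: "\<And>y. y \<notin> T \<Longrightarrow> (\<Sum>i\<in>R. p i * h (y + i)) \<le> h y"
    and h_on_T: "\<And>y. y \<in> T \<Longrightarrow> c \<le> h y"
  shows "c * hit_prob p R T N x \<le> h x"
proof (induction N arbitrary: x)
  case 0
  show ?case using h_nonneg h_on_T by (simp add: hit_prob_0)
next
  case (Suc N)
  show ?case
  proof (cases "x \<in> T")
    case False
    have "c * hit_prob p R T (Suc N) x = (\<Sum>i\<in>R. p i * (c * hit_prob p R T N (x + i)))"
      using False by (simp add: hit_prob_Suc R(1,2) sum_distrib_left mult_ac)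
    also have "\<dots> \<le> (\<Sum>i\<in>R. p i * h (x + i))"
      by (intro sum_mono mult_left_mono Suc R(3))
    also have "\<dots> \<le> h x" using False by (rule h_super)
    finally show ?thesis .
  qed (simp add: hit_prob_Suc R(1,2) h_on_T)
qed

lemma hit_prob_ruin_bound:
  assumes gamma: "0 < \<gamma>" "\<gamma> < 1" "rw_f l p \<gamma> = 0"
    and p: "\<And>i. 0 \<le> p i" "(\<Sum>i = - int l..int l. p i) = 1"
    and xi: "0 < \<xi>"
  shows "hit_prob p {- int l..int l} {.. - \<xi>} N 0
           \<le> 1 / (\<gamma> powi (- \<xi> - 1) - \<gamma> powi (-1) + 1)"
proof -
  define c where "c = \<gamma> powi (- \<xi>) - (1 - \<gamma>)"
  have "c * hit_prob p {- int l..int l} {.. - \<xi>} N 0 \<le> walk_potential \<gamma> 0"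
  proof (rule hit_prob_le_superharmonic)
    show "0 \<le> walk_potential \<gamma> y" for y
      using walk_potential_pos[OF gamma(1)] by (rule less_imp_le)
    show "c \<le> walk_potential \<gamma> y" if "y \<in> {.. - \<xi>}" for y
      using walk_potential_lower_bound[OF gamma(1,2)] that by (simp add: c_def)
  qed (use walk_potential_superharmonic[OF gamma p] p in auto)
  moreover have "1 < \<gamma> powi (- \<xi>)"
    using power_int_strict_decreasing[of "- \<xi>" 0 \<gamma>] gamma(1,2) xi by simp
  then have "0 < c"
    using gamma(1) by (simp add: c_def)
  ultimately have "hit_prob p {- int l..int l} {.. - \<xi>} N 0 \<le> \<gamma> / c"
    by (simp add: pos_le_divide_eq mult.commute[of c])
  also have "\<gamma> / c = 1 / (\<gamma> powi (- \<xi> - 1) - \<gamma> powi (-1) + 1)"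
    using gamma(1) by (simp add: c_def power_int_diff field_simps)
  finally show ?thesis .
qed

lemma walk_hits_eq_UN_prefixes:
  fixes Y :: "nat \<Rightarrow> 'a \<Rightarrow> int"
  shows "{\<omega> \<in> A. \<exists>n \<le> N. x + (\<Sum>k<n. Y k \<omega>) \<in> T}
           = (\<Union>s \<in> {s. length s = N \<and> hits T x s}. {\<omega> \<in> A. \<forall>k < length s. Y k \<omega> = s ! k})"
proof -
  define path where "path \<omega> = map (\<lambda>k. Y k \<omega>) [0..<N]" for \<omega>
  have path_eq: "path \<omega> = s \<longleftrightarrow> (\<forall>k < length s. Y k \<omega> = s ! k)" if "length s = N" for s \<omega>
    using that by (auto simp: path_def list_eq_iff_nth_eq)
  have "sum_list (take n (path \<omega>)) = (\<Sum>k<n. Y k \<omega>)" if "n \<le> N" for n \<omega>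
    using that by (simp add: path_def take_map sum_list_sum_nth atLeast0LessThan min_def)
  then have hits_path: "(\<exists>n \<le> N. x + (\<Sum>k<n. Y k \<omega>) \<in> T) \<longleftrightarrow> hits T x (path \<omega>)" for \<omega>
    unfolding hits_def by (intro ex_cong1 conj_cong) (simp_all add: path_def)
  have "(\<exists>s. length s = N \<and> hits T x s \<and> (\<forall>k < length s. Y k \<omega> = s ! k))
          \<longleftrightarrow> hits T x (path \<omega>)" for \<omega>
  proof
    assume "\<exists>s. length s = N \<and> hits T x s \<and> (\<forall>k < length s. Y k \<omega> = s ! k)"
    then obtain s where "length s = N" "hits T x s" "\<forall>k < length s. Y k \<omega> = s ! k"
      by blast
    then show "hits T x (path \<omega>)"
      using path_eq[of s \<omega>] by simp
  next
    assume "hits T x (path \<omega>)"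
    moreover have "length (path \<omega>) = N"
      by (simp add: path_def)
    ultimately show "\<exists>s. length s = N \<and> hits T x s \<and> (\<forall>k < length s. Y k \<omega> = s ! k)"
      using path_eq[of "path \<omega>" \<omega>] by blast
  qed
  then show ?thesis
    using hits_path by blast
qed

lemma sets_walk_hits:
  fixes Y :: "nat \<Rightarrow> 'a \<Rightarrow> int"
  assumes [measurable]: "\<And>k. Y k \<in> measurable M (count_space UNIV)"
  shows "{\<omega> \<in> space M. \<exists>n \<le> N. x + (\<Sum>k<n. Y k \<omega>) \<in> T} \<in> sets M"
proof -
  have "{\<omega> \<in> space M. \<forall>k < length s. Y k \<omega> = s ! k} \<in> sets M" for s
    by measurable
  moreover have "countable {s. length s = N \<and> hits T x s}"
    by (rule countableI_type)
  ultimately show ?thesis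
    unfolding walk_hits_eq_UN_prefixes by (intro sets.countable_UN') auto
qed

lemma sets_Collect_Ex_atMost:
  fixes P :: "nat \<Rightarrow> 'a \<Rightarrow> bool"
  assumes "\<And>n. {\<omega> \<in> space M. P n \<omega>} \<in> sets M"
  shows "{\<omega> \<in> space M. \<exists>n \<le> N. P n \<omega>} \<in> sets M"
  using sets.sets_Collect_finite_Ex[where S = "{..N}" and P = P] assms by simp

context prob_space
begin

lemma AE_in_support:
  fixes Y :: "'a \<Rightarrow> 'b::countable"
  assumes [measurable]: "Y \<in> measurable M (count_space UNIV)"
    and "\<And>i. i \<notin> R \<Longrightarrow> prob {\<omega> \<in> space M. Y \<omega> = i} = 0"
  shows "AE \<omega> in M. Y \<omega> \<in> R"
proof -
  have "AE \<omega> in M. \<forall>i \<in> - R. Y \<omega> \<noteq> i"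
  proof (rule AE_ball_countable')
    fix i assume "i \<in> - R"
    then show "AE \<omega> in M. Y \<omega> \<noteq> i"
      using assms(2) by (subst prob_Collect_eq_0[symmetric]) auto
  qed simp
  then show ?thesis
    by eventually_elim auto
qed

lemma sum_distribution_eq_1:
  fixes Y :: "'a \<Rightarrow> 'b::countable"
  assumes [measurable]: "Y \<in> measurable M (count_space UNIV)"
    and distr: "\<And>i. prob {\<omega> \<in> space M. Y \<omega> = i} = p i"
    and R: "finite R" "\<And>i. i \<notin> R \<Longrightarrow> p i = 0"
  shows "sum p R = 1"
proof -
  have events: "{\<omega> \<in> space M. Y \<omega> = i} \<in> events" for i
    by measurable
  have "AE \<omega> in M. Y \<omega> \<in> R"
    using R(2) by (intro AE_in_support) (simp_all add: distr)
  then have "1 = prob (\<Union>i\<in>R. {\<omega> \<in> space M. Y \<omega> = i})"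
    using R(1) events by (subst prob_space[symmetric], intro measure_eq_AE) auto
  also have "\<dots> = (\<Sum>i\<in>R. prob {\<omega> \<in> space M. Y \<omega> = i})"
    using R(1) events by (intro finite_measure_finite_Union) (auto simp: disjoint_family_on_def)
  finally show ?thesis
    by (simp add: distr)
qed

lemma prob_Ex_le_of_prob_Ex_atMost_le:
  fixes P :: "nat \<Rightarrow> 'a \<Rightarrow> bool"
  assumes "\<And>n. {\<omega> \<in> space M. P n \<omega>} \<in> events"
    and "\<And>N. prob {\<omega> \<in> space M. \<exists>n \<le> N. P n \<omega>} \<le> b"
  shows "prob {\<omega> \<in> space M. \<exists>n. P n \<omega>} \<le> b"
proof -
  define A where "A N = {\<omega> \<in> space M. \<exists>n \<le> N. P n \<omega>}" for N
  have "A N \<in> events" for N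
    unfolding A_def by (rule sets_Collect_Ex_atMost[OF assms(1)])
  then have "range A \<subseteq> events"
    by blast
  moreover have "incseq A"
    by (rule incseq_SucI) (auto simp: A_def intro: le_SucI)
  ultimately have "(\<lambda>N. prob (A N)) \<longlonglongrightarrow> prob (\<Union>N. A N)"
    by (rule finite_Lim_measure_incseq)
  then have "prob (\<Union>N. A N) \<le> b"
    by (rule LIMSEQ_le_const2) (simp add: A_def assms(2))
  moreover have "(\<Union>N. A N) = {\<omega> \<in> space M. \<exists>n. P n \<omega>}"
    by (auto simp: A_def)
  ultimately show ?thesis
    by simp
qed

lemma prob_prefix_eq_prod_list:
  assumes indep: "indep_vars (\<lambda>_. count_space UNIV) Y UNIV"
    and distr: "\<And>k i. prob {\<omega> \<in> space M. Y k \<omega> = i} = p i"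
  shows "prob {\<omega> \<in> space M. \<forall>k < length s. Y k \<omega> = s ! k} = prod_list (map p s)"
proof (cases "s = []")
  case False
  have "indep_events (\<lambda>k. {\<omega> \<in> space M. Y k \<omega> = s ! k}) UNIV"
    by (rule indep_eventsI_indep_vars[OF indep]) auto
  then have "prob (\<Inter>k<length s. {\<omega> \<in> space M. Y k \<omega> = s ! k})
               = (\<Prod>k<length s. prob {\<omega> \<in> space M. Y k \<omega> = s ! k})"
    using False unfolding indep_events_def
    by (elim conjE) (drule spec[of _ "{..<length s}"], simp add: lessThan_empty_iff)
  moreover have "(\<Inter>k<length s. {\<omega> \<in> space M. Y k \<omega> = s ! k})
                   = {\<omega> \<in> space M. \<forall>k < length s. Y k \<omega> = s ! k}"
    using False by auto
  ultimately show ?thesis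
    by (simp add: distr prod.list_conv_set_nth atLeast0LessThan)
qed (simp add: prob_space)

lemma prob_prefixes_eq_hit_prob:
  fixes Y :: "nat \<Rightarrow> 'a \<Rightarrow> int"
  assumes indep: "indep_vars (\<lambda>_. count_space UNIV) Y UNIV"
    and distr: "\<And>k i. prob {\<omega> \<in> space M. Y k \<omega> = i} = p i"
    and "finite R"
  shows "prob (\<Union>s \<in> {s. set s \<subseteq> R \<and> length s = N \<and> hits T x s}.
                 {\<omega> \<in> space M. \<forall>k < length s. Y k \<omega> = s ! k})
           = hit_prob p R T N x"
proof -
  define E where "E s = {\<omega> \<in> space M. \<forall>k < length s. Y k \<omega> = s ! k}" for s
  define S where "S = {s. set s \<subseteq> R \<and> length s = N \<and> hits T x s}"
  have [measurable]: "Y k \<in> measurable M (count_space UNIV)" for k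
    using indep by (auto simp: indep_vars_def2)
  have "E s \<in> events" for s
    unfolding E_def by measurable
  moreover have "finite S"
    using finite_lists_length_eq[OF assms(3), of N] by (rule rev_finite_subset) (auto simp: S_def)
  moreover have "disjoint_family_on E S"
    by (auto simp: disjoint_family_on_def S_def E_def list_eq_iff_nth_eq)
  ultimately have "prob (\<Union>s\<in>S. E s) = (\<Sum>s\<in>S. prod_list (map p s))"
    by (subst finite_measure_finite_Union)
      (auto simp: E_def prob_prefix_eq_prod_list[OF indep distr])
  also have "\<dots> = hit_prob p R T N x"
    unfolding hit_prob_def S_def
    by (simp add: sum.inter_filter[symmetric] finite_lists_length_eq assms(3) conj_assoc)
  finally show ?thesis
    by (simp add: E_def S_def)
qed

lemma prob_walk_hits_eq_hit_prob:
  fixes Y :: "nat \<Rightarrow> 'a \<Rightarrow> int"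
  assumes indep: "indep_vars (\<lambda>_. count_space UNIV) Y UNIV"
    and distr: "\<And>k i. prob {\<omega> \<in> space M. Y k \<omega> = i} = p i"
    and R: "finite R" "\<And>i. i \<notin> R \<Longrightarrow> p i = 0"
  shows "prob {\<omega> \<in> space M. \<exists>n \<le> N. x + (\<Sum>k<n. Y k \<omega>) \<in> T} = hit_prob p R T N x"
proof -
  define E where "E s = {\<omega> \<in> space M. \<forall>k < length s. Y k \<omega> = s ! k}" for s
  have Y_meas [measurable]: "Y k \<in> measurable M (count_space UNIV)" for k
    using indep by (auto simp: indep_vars_def2)
  have E_sets: "E s \<in> events" for s
    unfolding E_def by measurable
  have AE_R: "AE \<omega> in M. \<forall>k. Y k \<omega> \<in> R"
    unfolding AE_all_countable using R(2) by (intro allI AE_in_support Y_meas) (simp add: distr)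
  have "prob {\<omega> \<in> space M. \<exists>n \<le> N. x + (\<Sum>k<n. Y k \<omega>) \<in> T}
          = prob (\<Union>s \<in> {s. set s \<subseteq> R \<and> length s = N \<and> hits T x s}. E s)"
    unfolding walk_hits_eq_UN_prefixes E_def[symmetric]
  proof (rule measure_eq_AE)
    show "AE \<omega> in M. \<omega> \<in> (\<Union>s \<in> {s. length s = N \<and> hits T x s}. E s)
                \<longleftrightarrow> \<omega> \<in> (\<Union>s \<in> {s. set s \<subseteq> R \<and> length s = N \<and> hits T x s}. E s)"
      using AE_R
    proof eventually_elim
      case (elim \<omega>)
      have "set s \<subseteq> R" if "\<omega> \<in> E s" for s
      proof
        fix i assume "i \<in> set s"
        then obtain k where "k < length s" "i = s ! k"
          by (auto simp: in_set_conv_nth)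
        then show "i \<in> R"
          using that elim by (auto simp: E_def) metis
      qed
      then show ?case
        by auto
    qed
  qed (use E_sets in \<open>auto intro: sets.countable_UN'\<close>)
  also have "\<dots> = hit_prob p R T N x"
    unfolding E_def using indep distr R(1) by (rule prob_prefixes_eq_hit_prob)
  finally show ?thesis .
qed

lemma prob_process_hits_eq_hit_prob:
  fixes X :: "nat \<Rightarrow> 'a \<Rightarrow> int"
  assumes meas: "\<And>n. X n \<in> measurable M (count_space UNIV)"
    and start: "AE \<omega> in M. X 0 \<omega> = x"
    and indep: "indep_vars (\<lambda>_. count_space UNIV) (\<lambda>k \<omega>. X (Suc k) \<omega> - X k \<omega>) UNIV"
    and distr: "\<And>k i. prob {\<omega> \<in> space M. X (Suc k) \<omega> - X k \<omega> = i} = p i"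
    and R: "finite R" "\<And>i. i \<notin> R \<Longrightarrow> p i = 0"
  shows "prob {\<omega> \<in> space M. \<exists>n \<le> N. X n \<omega> \<in> T} = hit_prob p R T N x"
proof -
  define Y where "Y = (\<lambda>k \<omega>. X (Suc k) \<omega> - X k \<omega>)"
  have partial_sums: "(\<Sum>k<n. Y k \<omega>) = X n \<omega> - X 0 \<omega>" for n \<omega>
    using sum_lessThan_telescope[of "\<lambda>k. X k \<omega>"] by (simp add: Y_def)
  have Y_meas: "Y k \<in> measurable M (count_space UNIV)" for k
    using indep by (auto simp: indep_vars_def2 Y_def)
  have "prob {\<omega> \<in> space M. \<exists>n \<le> N. X n \<omega> \<in> T}
          = prob {\<omega> \<in> space M. \<exists>n \<le> N. x + (\<Sum>k<n. Y k \<omega>) \<in> T}"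
  proof (rule measure_eq_AE)
    show "AE \<omega> in M. \<omega> \<in> {\<omega> \<in> space M. \<exists>n \<le> N. X n \<omega> \<in> T}
              \<longleftrightarrow> \<omega> \<in> {\<omega> \<in> space M. \<exists>n \<le> N. x + (\<Sum>k<n. Y k \<omega>) \<in> T}"
      using start by eventually_elim (simp add: partial_sums)
    show "{\<omega> \<in> space M. \<exists>n \<le> N. X n \<omega> \<in> T} \<in> events"
      by (intro sets_Collect_Ex_atMost measurable_sets_Collect[OF meas]) simp
    show "{\<omega> \<in> space M. \<exists>n \<le> N. x + (\<Sum>k<n. Y k \<omega>) \<in> T} \<in> events"
      by (rule sets_walk_hits[OF Y_meas])
  qed
  also have "\<dots> = hit_prob p R T N x"
  proof (rule prob_walk_hits_eq_hit_prob)
    show "indep_vars (\<lambda>_. count_space UNIV) Y UNIV"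
      using indep by (simp add: Y_def)
    show "prob {\<omega> \<in> space M. Y k \<omega> = i} = p i" for k i
      using distr by (simp add: Y_def)
    show "finite R"
      by (fact R(1))
    show "p i = 0" if "i \<notin> R" for i
      using that by (rule R(2))
  qed
  finally show ?thesis .
qed

end

theorem mainTheorem8:
  fixes M :: "'a measure" and X :: "nat \<Rightarrow> 'a \<Rightarrow> int"
    and p :: "int \<Rightarrow> real" and l :: nat and \<gamma> :: real and \<xi> :: int
  assumes "prob_space M"
    and meas: "\<And>n. X n \<in> measurable M (count_space UNIV)"
    and start: "AE \<omega> in M. X 0 \<omega> = 0"
    and indep: "prob_space.indep_vars M (\<lambda>_. count_space UNIV)
                  (\<lambda>n \<omega>. X (Suc n) \<omega> - X n \<omega>) UNIV"
    and distr: "\<And>n i. measure M {\<omega> \<in> space M. X (Suc n) \<omega> - X n \<omega> = i} = p i"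
    and l_pos: "l > 0"
    and bounded: "\<And>i. \<bar>i\<bar> > int l \<Longrightarrow> p i = 0"
    and bias: "(\<Sum>i = - int l..int l. real_of_int i * p i) > 0"
    and gamma: "0 < \<gamma>" "\<gamma> < 1" "rw_f l p \<gamma> = 0"
    and xi: "\<xi> > 0"
  shows "measure M {\<omega> \<in> space M. \<exists>n. X n \<omega> \<le> - \<xi>}
           \<le> 1 / (\<gamma> powi (- \<xi> - 1) - \<gamma> powi (-1) + 1)"
proof -
  interpret prob_space M by fact
  define R where "R = {- int l..int l}"
  have finite_R: "finite R" and p_outside: "i \<notin> R \<Longrightarrow> p i = 0" for i
    using bounded by (auto simp: R_def)
  have p_nonneg: "0 \<le> p i" for i
    using distr[of 0 i] by (metis measure_nonneg)
  have "random_variable (count_space UNIV) (\<lambda>\<omega>. X (Suc 0) \<omega> - X 0 \<omega>)"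
    using indep by (auto simp: indep_vars_def2)
  then have p_sum: "sum p R = 1"
    using distr finite_R p_outside by (rule sum_distribution_eq_1)
  have "{\<omega> \<in> space M. X n \<omega> \<le> - \<xi>} \<in> events" for n
    by (rule measurable_sets_Collect[OF meas]) simp
  moreover have "prob {\<omega> \<in> space M. \<exists>n \<le> N. X n \<omega> \<le> - \<xi>}
          \<le> 1 / (\<gamma> powi (- \<xi> - 1) - \<gamma> powi (-1) + 1)" for N
  proof -
    have "prob {\<omega> \<in> space M. \<exists>n \<le> N. X n \<omega> \<le> - \<xi>} = hit_prob p R {.. - \<xi>} N 0"
      using prob_process_hits_eq_hit_prob[OF meas start indep distr finite_R p_outside, of N "{.. - \<xi>}"]
      by simp
    also have "\<dots> \<le> 1 / (\<gamma> powi (- \<xi> - 1) - \<gamma> powi (-1) + 1)"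
      unfolding R_def by (rule hit_prob_ruin_bound[OF gamma p_nonneg p_sum[unfolded R_def] xi])
    finally show ?thesis .
  qed
  ultimately show ?thesis
    by (rule prob_Ex_le_of_prob_Ex_atMost_le)
qed

end
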